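(* Let $\mathcal{S}$ be a set of triangles in a graph with $|\mathcal{S}|>1$ such that every two distinct triangles $t,t'\in\mathcal{S}$ satisfy $|E(t)\cap E(t')|=1$. Then either $|\bigcap_{t\in\mathcal{S}}E(t)|=1$, or $|\mathcal{S}|\leq 4$ and the vertex set $\bigcup_{t\in\mathcal{S}}V(t)$ induces a $K_4$.
   Context: A triangle is a set of three pairwise adjacent vertices of a simple graph; $V(t)$ and $E(t)$ denote its vertex set and its set of three edges. *)

theory Defs
  imports Main
begin

definition simple_graph :: "'a set \<Rightarrow> ('a \<Rightarrow> 'a \<Rightarrow> bool) \<Rightarrow> bool" where
  "simple_graph V adj \<longleftrightarrow> finite V \<and> (\<forall>x y. adj x y \<longrightarrow> adj y x)
     \<and> (\<forall>x. \<not> adj x x) \<and> (\<forall>x y. adj x y \<longrightarrow> x \<in> V \<and> y \<in> V)"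

definition triangle :: "'a set \<Rightarrow> ('a \<Rightarrow> 'a \<Rightarrow> bool) \<Rightarrow> 'a set \<Rightarrow> bool" where
  "triangle V adj t \<longleftrightarrow> t \<subseteq> V \<and> card t = 3 \<and> (\<forall>x\<in>t. \<forall>y\<in>t. x \<noteq> y \<longrightarrow> adj x y)"

definition tri_edges :: "'a set \<Rightarrow> 'a set set" where
  "tri_edges t = {e. e \<subseteq> t \<and> card e = 2}"

definition induces_K4 :: "('a \<Rightarrow> 'a \<Rightarrow> bool) \<Rightarrow> 'a set \<Rightarrow> bool" where
  "induces_K4 adj U \<longleftrightarrow> card U = 4 \<and> (\<forall>x\<in>U. \<forall>y\<in>U. x \<noteq> y \<longrightarrow> adj x y)"

end

theory Submission
  imports Defs
begin

text \<open>Since E(t) \<inter> E(t') = E(t \<inter> t') and a set of k vertices spans k choose 2 edges, two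
triangles share exactly one edge iff they share exactly two vertices. A family of 3-sets
pairwise meeting in exactly two points either has a pair common to all its members, or
lives inside the 4-set t1 \<union> t2 spanned by any two of them. In the first case the common
edge is the only edge in all triangles. In the second case S consists of at least three of
the four 3-subsets of the 4-set, and any three of them cover every pair of it, which makes
the 4-set a K_4.\<close>

lemma tri_edges_Int: "tri_edges t \<inter> tri_edges t' = tri_edges (t \<inter> t')"
  unfolding tri_edges_def by auto

lemma INT_tri_edges: "S \<noteq> {} \<Longrightarrow> (\<Inter>t\<in>S. tri_edges t) = tri_edges (\<Inter>S)"
  unfolding tri_edges_def by auto

lemma tri_edges_of_card_2:
  assumes "card e = 2"
  shows "tri_edges e = {e}"
proof -
  have "finite e" using assms by (simp add: card_ge_0_finite)
  then have "x = e" if "x \<subseteq> e" "card x = 2" for x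
    using that assms by (simp add: card_subset_eq)
  then show ?thesis unfolding tri_edges_def using assms by auto
qed

lemma card_tri_edges: "finite A \<Longrightarrow> card (tri_edges A) = card A choose 2"
  unfolding tri_edges_def using n_subsets by blast

lemma card_Int_eq_2_if_one_common_edge:
  assumes "card t = 3" and "card (tri_edges t \<inter> tri_edges t') = 1"
  shows "card (t \<inter> t') = 2"
proof -
  have "finite t" using assms(1) by (simp add: card_ge_0_finite)
  then have "card (t \<inter> t') \<le> 3" and "card (t \<inter> t') choose 2 = 1"
    using assms card_tri_edges[of "t \<inter> t'"] card_mono[of t "t \<inter> t'"]
    by (auto simp: tri_edges_Int)
  moreover have "k choose 2 \<noteq> 1" if "k \<le> 3" "k \<noteq> 2" for k :: nat
    using that by (auto simp: choose_two le_Suc_eq numeral_eq_Suc)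
  ultimately show ?thesis by blast
qed

lemma eq_insert_Int_if_not_in_Un:
  assumes "card t = 3" and "card (t \<inter> t\<^sub>1) = 2" and "card (t \<inter> t\<^sub>2) = 2"
    and "card (t\<^sub>1 \<inter> t\<^sub>2) = 2" and "c \<in> t" and "c \<notin> t\<^sub>1 \<union> t\<^sub>2"
  shows "t = insert c (t\<^sub>1 \<inter> t\<^sub>2)"
proof -
  have "finite t" using assms(1) by (simp add: card_ge_0_finite)
  then have card_rest: "card (t - {c}) = 2" using assms(1,5) by simp
  have "t \<inter> t\<^sub>i = t - {c}" if "card (t \<inter> t\<^sub>i) = 2" "c \<notin> t\<^sub>i" for t\<^sub>i
    using that card_rest \<open>finite t\<close> by (intro card_subset_eq) auto
  then have "t - {c} \<subseteq> t\<^sub>1 \<inter> t\<^sub>2" using assms(2,3,6) by blast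
  then have "t - {c} = t\<^sub>1 \<inter> t\<^sub>2"
    using card_rest assms(4) by (metis card_subset_eq card.infinite zero_neq_numeral)
  then show ?thesis using assms(5) by blast
qed

lemma subset_Un_if_pair_not_common:
  assumes card3: "\<forall>t\<in>F. card t = 3"
    and meet2: "\<forall>t\<in>F. \<forall>t'\<in>F. t \<noteq> t' \<longrightarrow> card (t \<inter> t') = 2"
    and "t\<^sub>1 \<in> F" "t\<^sub>2 \<in> F" "t\<^sub>1 \<noteq> t\<^sub>2"
    and "t\<^sub>3 \<in> F" and not_common: "\<not> t\<^sub>1 \<inter> t\<^sub>2 \<subseteq> t\<^sub>3"
  shows "\<forall>t\<in>F. t \<subseteq> t\<^sub>1 \<union> t\<^sub>2"
proof -
  have pair: "card (t\<^sub>1 \<inter> t\<^sub>2) = 2" using assms meet2 by blast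
  have outside: "t = insert c (t\<^sub>1 \<inter> t\<^sub>2)" if "t \<in> F" "c \<in> t" "c \<notin> t\<^sub>1 \<union> t\<^sub>2" for t c
    using that assms by (intro eq_insert_Int_if_not_in_Un[OF _ _ _ pair]) auto
  have t\<^sub>3_sub: "t\<^sub>3 \<subseteq> t\<^sub>1 \<union> t\<^sub>2"
    using outside[OF \<open>t\<^sub>3 \<in> F\<close>] not_common by blast
  show ?thesis
  proof (intro ballI subsetI, rule ccontr)
    fix t c assume "t \<in> F" "c \<in> t" "c \<notin> t\<^sub>1 \<union> t\<^sub>2"
    then have t_eq: "t = insert c (t\<^sub>1 \<inter> t\<^sub>2)" by (rule outside)
    then have "t \<noteq> t\<^sub>3" and "t \<inter> t\<^sub>3 \<subset> t\<^sub>1 \<inter> t\<^sub>2"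
      using not_common t\<^sub>3_sub \<open>c \<notin> t\<^sub>1 \<union> t\<^sub>2\<close> by auto
    then have "card (t \<inter> t\<^sub>3) < 2"
      using pair by (metis card.infinite psubset_card_mono zero_neq_numeral)
    then show False using meet2 \<open>t \<in> F\<close> \<open>t\<^sub>3 \<in> F\<close> \<open>t \<noteq> t\<^sub>3\<close> by fastforce
  qed
qed

lemma pair_in_some_card3_subset:
  assumes "card U = 4" and "\<forall>t\<in>T. t \<subseteq> U \<and> card t = 3" and "card T \<ge> 3"
    and "p \<in> U" and "q \<in> U"
  shows "\<exists>t\<in>T. p \<in> t \<and> q \<in> t"
proof (rule ccontr)
  \<comment> \<open>Each t is determined by the one point of U it misses, and that point would be p or q.\<close>
  assume none: "\<not> ?thesis"
  have "finite U" using assms(1) by (simp add: card_ge_0_finite)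
  have "U - t \<in> {{p}, {q}}" if "t \<in> T" for t
  proof -
    have "t \<subseteq> U" "card t = 3" using that assms(2) by auto
    then have "card (U - t) = 1"
      using assms(1) \<open>finite U\<close> by (simp add: card_Diff_subset finite_subset)
    then obtain u where u: "U - t = {u}" by (auto simp: card_1_singleton_iff)
    have "p \<notin> t \<or> q \<notin> t" using none that by blast
    then show ?thesis using u assms(4,5) by auto
  qed
  then have "(\<lambda>t. U - t) ` T \<subseteq> {{p}, {q}}" by blast
  moreover have "inj_on (\<lambda>t. U - t) T"
    using assms(2) by (intro inj_onI) (metis double_diff order_refl)
  ultimately have "card T \<le> card {{p}, {q}}" by (intro card_inj_on_le) auto
  also have "\<dots> \<le> 2" by (simp add: card_insert_if)
  finally show False using assms(3) by simp
qed

lemma card_le_4_if_card3_subsets_of_card4: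
  assumes "card U = 4" and "\<forall>t\<in>T. t \<subseteq> U \<and> card t = 3"
  shows "card T \<le> 4"
proof -
  have "finite U" using assms(1) by (simp add: card_ge_0_finite)
  then have "card T \<le> card {B. B \<subseteq> U \<and> card B = 3}"
    using assms(2) by (intro card_mono) auto
  also have "\<dots> = 4" using n_subsets[of U 3] \<open>finite U\<close> assms(1) by (simp add: numeral_eq_Suc)
  finally show ?thesis .
qed

lemma INT_tri_edges_common_pair:
  assumes "t\<^sub>1 \<in> S" and "t\<^sub>2 \<in> S" and "card (t\<^sub>1 \<inter> t\<^sub>2) = 2" and "\<forall>t\<in>S. t\<^sub>1 \<inter> t\<^sub>2 \<subseteq> t"
  shows "(\<Inter>t\<in>S. tri_edges t) = {t\<^sub>1 \<inter> t\<^sub>2}"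
proof -
  have "\<Inter>S = t\<^sub>1 \<inter> t\<^sub>2" using assms(1,2,4) by blast
  then have "(\<Inter>t\<in>S. tri_edges t) = tri_edges (t\<^sub>1 \<inter> t\<^sub>2)"
    using assms(1) INT_tri_edges[of S] by auto
  also have "\<dots> = {t\<^sub>1 \<inter> t\<^sub>2}" using assms(3) by (rule tri_edges_of_card_2)
  finally show ?thesis .
qed

lemma triangles_within_4set_induce_K4:
  assumes "\<forall>t\<in>S. triangle V adj t" and "card U = 4" and "\<forall>t\<in>S. t \<subseteq> U" and "card S \<ge> 3"
  shows "card S \<le> 4 \<and> induces_K4 adj (\<Union>S)"
proof -
  have card3: "\<forall>t\<in>S. t \<subseteq> U \<and> card t = 3" using assms(1,3) by (simp add: triangle_def)
  then have cover: "\<exists>t\<in>S. p \<in> t \<and> q \<in> t" if "p \<in> U" "q \<in> U" for p q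
    using pair_in_some_card3_subset[OF assms(2) _ assms(4) that] by blast
  have "\<Union>S = U" using assms(3) cover by blast
  moreover have "adj p q" if "p \<in> U" "q \<in> U" "p \<noteq> q" for p q
    using cover[OF that(1,2)] assms(1) that(3) by (auto simp: triangle_def)
  ultimately show ?thesis
    using assms(2) card_le_4_if_card3_subsets_of_card4[OF assms(2) card3]
    by (simp add: induces_K4_def)
qed

theorem claim22:
  fixes V :: "'a set" and adj :: "'a \<Rightarrow> 'a \<Rightarrow> bool" and S :: "'a set set"
  assumes "simple_graph V adj"
    and "\<forall>t\<in>S. triangle V adj t"
    and "card S > 1"
    and "\<forall>t\<in>S. \<forall>t'\<in>S. t \<noteq> t' \<longrightarrow> card (tri_edges t \<inter> tri_edges t') = 1"
  shows "card (\<Inter>t\<in>S. tri_edges t) = 1 \<or> (card S \<le> 4 \<and> induces_K4 adj (\<Union>S))"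
proof -
  have "finite S" using assms(3) card.infinite by fastforce
  have card3: "\<forall>t\<in>S. card t = 3" using assms(2) by (simp add: triangle_def)
  have meet2: "\<forall>t\<in>S. \<forall>t'\<in>S. t \<noteq> t' \<longrightarrow> card (t \<inter> t') = 2"
    using card3 assms(4) card_Int_eq_2_if_one_common_edge by blast
  obtain t\<^sub>1 t\<^sub>2 where t12: "t\<^sub>1 \<in> S" "t\<^sub>2 \<in> S" "t\<^sub>1 \<noteq> t\<^sub>2"
    using assms(3) card_le_Suc0_iff_eq[OF \<open>finite S\<close>] by (metis One_nat_def not_le)
  then have pair: "card (t\<^sub>1 \<inter> t\<^sub>2) = 2" using meet2 by blast
  show ?thesis
  proof (cases "\<forall>t\<in>S. t\<^sub>1 \<inter> t\<^sub>2 \<subseteq> t")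
    case True
    then show ?thesis using INT_tri_edges_common_pair[OF t12(1,2) pair] by simp
  next
    case False
    then obtain t\<^sub>3 where t\<^sub>3: "t\<^sub>3 \<in> S" "\<not> t\<^sub>1 \<inter> t\<^sub>2 \<subseteq> t\<^sub>3" by blast
    have "t\<^sub>3 \<noteq> t\<^sub>1" "t\<^sub>3 \<noteq> t\<^sub>2" using t\<^sub>3(2) by blast+
    then have "card {t\<^sub>1, t\<^sub>2, t\<^sub>3} = 3" using t12(3) by simp
    then have "card S \<ge> 3"
      using t12 t\<^sub>3(1) card_mono[OF \<open>finite S\<close>, of "{t\<^sub>1, t\<^sub>2, t\<^sub>3}"] by simp
    moreover have "card (t\<^sub>1 \<union> t\<^sub>2) = 4"
      using t12 card3 pair card_Un_Int[of t\<^sub>1 t\<^sub>2] by (simp add: card_ge_0_finite)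
    moreover have "\<forall>t\<in>S. t \<subseteq> t\<^sub>1 \<union> t\<^sub>2"
      using subset_Un_if_pair_not_common[OF card3 meet2 t12 t\<^sub>3] .
    ultimately show ?thesis using triangles_within_4set_induce_K4[OF assms(2)] by blast
  qed
qed

end
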